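(* For arbitrarily large values of $|V|$ there exists a partition exchange economy with pairwise exchanges and only $n=3$ organizations whose $\big(\tfrac{|V|}{18}-3\big)$-supplemented core is empty.
   Context: Pairwise partition exchange economy: a set of organizations $N=\{1,\dots,n\}$; pairwise disjoint finite sets $V^1,\dots,V^n$, $V=\bigcup_i V^i$; subsets $U^i\subseteq V^i$ (patient vertices of organization $i$); an undirected (mutual) compatibility graph $\mathcal G=(V,E)$. An exchange among $W\subseteq V$ is a matching of $\mathcal G[W]$. The utility $u_i(M)$ of organization $i$ from a matching $M$ is the number of vertices of $U^i$ covered by $M$. Given a finite set $V^0$ of new vertices (additional altruistic donors, belonging to no organization), $\mathcal G^{+V^0}$ is obtained by adding the vertices of $V^0$, each joined by edges to an arbitrarily chosen set of vertices of $V$; exchanges in $\mathcal G^{+V^0}$ are its matchings. A nonempty coalition $P\subseteq N$ blocks a matching $M$ if there is a matching $M'$ of $\mathcal G[\bigcup_{i\in P}V^i]$ with $u_i(M')>u_i(M)$ for all $i\in P$. $M$ is in the $V^0$-supplemented core if it is a matching of $\mathcal G^{+V^0}$ blocked by no nonempty coalition. The $d$-supplemented core is nonempty if there exist a set $V^0$ with $|V^0|\le d$, a choice of its edges, and a matching in the $V^0$-supplemented core; otherwise it is empty. *)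

theory Defs
  imports Complex_Main
begin

definition all_verts :: "'o set \<Rightarrow> ('o \<Rightarrow> 'a set) \<Rightarrow> 'a set" where
  "all_verts N Vs = (\<Union>i\<in>N. Vs i)"

definition pe_economy :: "'o set \<Rightarrow> ('o \<Rightarrow> 'a set) \<Rightarrow> ('o \<Rightarrow> 'a set) \<Rightarrow> 'a set set \<Rightarrow> bool" where
  "pe_economy N Vs U E \<longleftrightarrow>
     finite N \<and>
     (\<forall>i\<in>N. finite (Vs i)) \<and>
     (\<forall>i\<in>N. \<forall>j\<in>N. i \<noteq> j \<longrightarrow> Vs i \<inter> Vs j = {}) \<and>
     (\<forall>i\<in>N. U i \<subseteq> Vs i) \<and>
     E \<subseteq> {{x, y} | x y. x \<noteq> y \<and> x \<in> all_verts N Vs \<and> y \<in> all_verts N Vs}"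

definition matching :: "'a set set \<Rightarrow> 'a set set \<Rightarrow> bool" where
  "matching E M \<longleftrightarrow> M \<subseteq> E \<and> (\<forall>e\<in>M. \<forall>f\<in>M. e \<noteq> f \<longrightarrow> e \<inter> f = {})"

definition utility :: "('o \<Rightarrow> 'a set) \<Rightarrow> 'o \<Rightarrow> 'a set set \<Rightarrow> nat" where
  "utility U i M = card (U i \<inter> \<Union>M)"

definition blocks :: "'o set \<Rightarrow> ('o \<Rightarrow> 'a set) \<Rightarrow> ('o \<Rightarrow> 'a set) \<Rightarrow> 'a set set \<Rightarrow> 'o set \<Rightarrow> 'a set set \<Rightarrow> bool" where
  "blocks N Vs U E P M \<longleftrightarrow> P \<noteq> {} \<and> P \<subseteq> N \<and>
     (\<exists>M'. matching {e \<in> E. e \<subseteq> all_verts P Vs} M' \<and>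
           (\<forall>i\<in>P. utility U i M' > utility U i M))"

definition in_supp_core :: "'o set \<Rightarrow> ('o \<Rightarrow> 'a set) \<Rightarrow> ('o \<Rightarrow> 'a set) \<Rightarrow> 'a set set \<Rightarrow> 'a set set \<Rightarrow> 'a set set \<Rightarrow> bool" where
  "in_supp_core N Vs U E E0 M \<longleftrightarrow>
     matching (E \<union> E0) M \<and> \<not> (\<exists>P. blocks N Vs U E P M)"

definition supp_core_nonempty :: "'o set \<Rightarrow> ('o \<Rightarrow> 'a set) \<Rightarrow> ('o \<Rightarrow> 'a set) \<Rightarrow> 'a set set \<Rightarrow> real \<Rightarrow> bool" where
  "supp_core_nonempty N Vs U E d \<longleftrightarrow>
     (\<exists>V0 E0 M. finite V0 \<and> real (card V0) \<le> d \<and> V0 \<inter> all_verts N Vs = {} \<and>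
        E0 \<subseteq> {{x, y} | x y. x \<in> V0 \<and> y \<in> all_verts N Vs} \<and>
        in_supp_core N Vs U E E0 M)"

end

theory Submission
  imports Defs
begin

text \<open>Give each of the three organizations 3t patients and t altruistic donors. The first t
  patients of the organizations form t disjoint triangles; every donor is compatible with every
  one of the remaining 2t patients of each organization. In a matching, even one using a set V0 of
  extra vertices, each triangle contributes at most one edge and every other edge contains a donor
  or a vertex of V0, so at most 5t + |V0| patients are covered. On the other hand any two
  organizations alone can cover 4t of their patients (t each in the triangles, 2t through their
  own donors), split between them as they like. If |V0| \<le> |V|/18 - 3 = 2t/3 - 3, the two
  organizations that are worst off together get at most 2/3 (5t + |V0|) \<le> 4t - 2 patients, so
  both can improve and they block.\<close>

lemma matching_mono: "matching E M \<Longrightarrow> E \<subseteq> E' \<Longrightarrow> matching E' M"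
  unfolding matching_def by blast

lemma matching_Un:
  assumes "matching E M1" "matching E M2" "\<Union>M1 \<inter> \<Union>M2 = {}"
  shows "matching E (M1 \<union> M2)"
  unfolding matching_def
proof (intro conjI ballI impI)
  show "M1 \<union> M2 \<subseteq> E" using assms(1,2) unfolding matching_def by blast
  fix e f assume "e \<in> M1 \<union> M2" "f \<in> M1 \<union> M2" "e \<noteq> f"
  then consider "e \<in> M1" "f \<in> M1" | "e \<in> M2" "f \<in> M2" | "e \<in> M1" "f \<in> M2" | "e \<in> M2" "f \<in> M1"
    by blast
  then show "e \<inter> f = {}"
  proof cases
    case 1
    then show ?thesis using assms(1) \<open>e \<noteq> f\<close> unfolding matching_def by simp
  next
    case 2
    then show ?thesis using assms(2) \<open>e \<noteq> f\<close> unfolding matching_def by simp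
  qed (use assms(3) in auto)
qed

lemma matching_complete_bipartite:
  assumes "finite P" "finite D" "card P \<le> card D" "D \<inter> P = {}"
  shows "\<exists>M. matching {{d, p} | d p. d \<in> D \<and> p \<in> P} M \<and> P \<subseteq> \<Union>M \<and> \<Union>M \<subseteq> D \<union> P"
proof -
  obtain f where f: "f ` P \<subseteq> D" "inj_on f P"
    using card_le_inj[OF assms(1-3)] by blast
  define M where "M = (\<lambda>p. {f p, p}) ` P"
  have "matching {{d, p} | d p. d \<in> D \<and> p \<in> P} M"
    unfolding matching_def M_def
    using f assms(4) by (auto simp: inj_on_eq_iff[OF f(2)])
  moreover have "P \<subseteq> \<Union>M" "\<Union>M \<subseteq> D \<union> P"
    unfolding M_def using f by auto
  ultimately show ?thesis by blast
qed

lemma card_disjoint_meeting_le: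
  assumes disj: "\<forall>e\<in>M. \<forall>f\<in>M. e \<noteq> f \<longrightarrow> e \<inter> f = {}" and "finite S"
  shows "finite {e\<in>M. e \<inter> S \<noteq> {}}" "card {e\<in>M. e \<inter> S \<noteq> {}} \<le> card S"
proof -
  let ?A = "{e\<in>M. e \<inter> S \<noteq> {}}"
  define g where "g e = (SOME x. x \<in> e \<inter> S)" for e
  have g: "g e \<in> e \<inter> S" if "e \<in> ?A" for e
    unfolding g_def by (rule someI_ex) (use that in auto)
  have "inj_on g ?A"
  proof (rule inj_onI, rule ccontr)
    fix e f assume "e \<in> ?A" "f \<in> ?A" "g e = g f" "e \<noteq> f"
    then have "g e \<in> e \<inter> f" "e \<inter> f = {}"
      using g[of e] g[of f] disj by auto
    then show False by simp
  qed
  moreover have "g ` ?A \<subseteq> S" using g by auto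
  ultimately show "finite ?A" "card ?A \<le> card S"
    using inj_on_finite[of g ?A S] card_inj_on_le[of g ?A S] \<open>finite S\<close> by simp_all
qed

lemma card_disjoint_in_cells_le:
  assumes disj: "\<forall>e\<in>M. \<forall>f\<in>M. e \<noteq> f \<longrightarrow> e \<inter> f = {}" and "finite I"
    and cells: "\<And>c. c \<in> I \<Longrightarrow> finite (K c) \<and> card (K c) \<le> 3"
    and edges: "\<And>e. e \<in> M \<Longrightarrow> card e = 2 \<and> (\<exists>c\<in>I. e \<subseteq> K c)"
  shows "finite M" "card M \<le> card I"
proof -
  define g where "g e = (SOME c. c \<in> I \<and> e \<subseteq> K c)" for e
  have g: "g e \<in> I \<and> e \<subseteq> K (g e)" if "e \<in> M" for e
    unfolding g_def by (rule someI_ex) (use edges[OF that] in auto)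
  have "inj_on g M"
  proof (rule inj_onI, rule ccontr)
    fix e f assume "e \<in> M" "f \<in> M" "g e = g f" "e \<noteq> f"
    then have sub: "e \<union> f \<subseteq> K (g e)" and "e \<inter> f = {}" "card e = 2" "card f = 2"
      using g[of e] g[of f] disj edges by auto
    then have "card (e \<union> f) = 4"
      by (simp add: card_Un_disjoint card_ge_0_finite)
    moreover have "card (e \<union> f) \<le> card (K (g e))"
      using card_mono[OF _ sub] cells g \<open>e \<in> M\<close> by auto
    ultimately show False
      using cells g \<open>e \<in> M\<close> by fastforce
  qed
  moreover have "g ` M \<subseteq> I" using g by auto
  ultimately show "finite M" "card M \<le> card I"
    using inj_on_finite[of g M I] card_inj_on_le[of g M I] \<open>finite I\<close> by simp_all
qed

lemma card_covered_by_matching_le: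
  assumes disj: "\<forall>e\<in>M. \<forall>f\<in>M. e \<noteq> f \<longrightarrow> e \<inter> f = {}"
    and "finite I" "finite N" "N \<inter> S = {}"
    and cells: "\<And>c. c \<in> I \<Longrightarrow> finite (K c) \<and> card (K c) \<le> 3"
    and edges: "\<And>e. e \<in> M \<Longrightarrow> card e = 2 \<and> ((\<exists>c\<in>I. e \<subseteq> K c) \<or> e \<inter> N \<noteq> {})"
  shows "card (S \<inter> \<Union>M) \<le> 2 * card I + card N"
proof -
  define M1 where "M1 = {e\<in>M. \<exists>c\<in>I. e \<subseteq> K c}"
  have "\<forall>e\<in>M1. \<forall>f\<in>M1. e \<noteq> f \<longrightarrow> e \<inter> f = {}"
    using disj by (simp add: M1_def)
  moreover have "card e = 2 \<and> (\<exists>c\<in>I. e \<subseteq> K c)" if "e \<in> M1" for e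
    using that edges by (simp add: M1_def)
  ultimately have M1: "finite M1" "card M1 \<le> card I"
    using card_disjoint_in_cells_le[of M1 I K] \<open>finite I\<close> cells by auto
  have "M - M1 \<subseteq> {e\<in>M. e \<inter> N \<noteq> {}}"
    using edges by (auto simp: M1_def)
  moreover note card_disjoint_meeting_le[OF disj \<open>finite N\<close>]
  ultimately have M2: "finite (M - M1)" "card (M - M1) \<le> card N"
    using finite_subset card_mono[of "{e\<in>M. e \<inter> N \<noteq> {}}" "M - M1"] by auto
  have le1: "card (S \<inter> e) \<le> 1" if "e \<in> M - M1" for e
  proof -
    have "card e = 2" "e \<inter> N \<noteq> {}"
      using that edges \<open>M - M1 \<subseteq> _\<close> by auto
    then have "card (S \<inter> e) < card e"
      using \<open>N \<inter> S = {}\<close> by (intro psubset_card_mono) (auto simp: card_ge_0_finite)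
    then show ?thesis using \<open>card e = 2\<close> by linarith
  qed
  have le2: "card (S \<inter> e) \<le> 2" if "e \<in> M1" for e
  proof -
    have "card e = 2" using that edges by (simp add: M1_def)
    then show ?thesis using card_mono[of e "S \<inter> e"] by (simp add: card_ge_0_finite)
  qed
  have "finite M" using M1(1) M2(1) by (metis finite_Diff2)
  have "card (S \<inter> \<Union>M) = card (\<Union>e\<in>M. S \<inter> e)"
    by (simp only: Int_Union)
  also have "\<dots> \<le> (\<Sum>e\<in>M. card (S \<inter> e))"
    using \<open>finite M\<close> by (rule card_UN_le)
  also have "\<dots> = (\<Sum>e\<in>M - M1. card (S \<inter> e)) + (\<Sum>e\<in>M1. card (S \<inter> e))"
    using \<open>finite M\<close> by (intro sum.subset_diff) (auto simp: M1_def)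
  also have "\<dots> \<le> card (M - M1) + card M1 * 2"
    using sum_bounded_above[of "M - M1" "\<lambda>e. card (S \<inter> e)" 1]
      sum_bounded_above[of M1 "\<lambda>e. card (S \<inter> e)" 2] le1 le2
    by (intro add_mono) simp_all
  finally show ?thesis using M1 M2 by linarith
qed

lemma card_le_utility: "finite (U i) \<Longrightarrow> A \<subseteq> U i \<inter> \<Union>M \<Longrightarrow> card A \<le> utility U i M"
  unfolding utility_def by (simp add: card_mono)

lemma sum_utility_eq:
  assumes "finite N" "\<forall>i\<in>N. finite (U i)" "\<forall>i\<in>N. \<forall>j\<in>N. i \<noteq> j \<longrightarrow> U i \<inter> U j = {}"
  shows "(\<Sum>i\<in>N. utility U i M) = card ((\<Union>i\<in>N. U i) \<inter> \<Union>M)"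
proof -
  have "(\<Union>i\<in>N. U i) \<inter> \<Union>M = (\<Union>i\<in>N. U i \<inter> \<Union>M)" by auto
  moreover have "\<forall>i\<in>N. \<forall>j\<in>N. i \<noteq> j \<longrightarrow> (U i \<inter> \<Union>M) \<inter> (U j \<inter> \<Union>M) = {}"
    using assms(3) by auto
  ultimately show ?thesis
    unfolding utility_def using assms(1,2) card_UN_disjoint[of N "\<lambda>i. U i \<inter> \<Union>M"] by simp
qed

definition vert :: "nat \<Rightarrow> nat \<Rightarrow> nat" where
  "vert i x = 4 * x + i"

definition org_verts :: "nat \<Rightarrow> nat \<Rightarrow> nat set" where
  "org_verts t i = vert i ` {..<4 * t}"

definition patients :: "nat \<Rightarrow> nat \<Rightarrow> nat set" where
  "patients t i = vert i ` {..<3 * t}"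

definition donors :: "nat \<Rightarrow> nat set" where
  "donors t = (\<lambda>(i, x). vert i x) ` ({1, 2, 3} \<times> {3 * t..<4 * t})"

definition triangle_edges :: "nat \<Rightarrow> nat set set" where
  "triangle_edges t = {{vert i c, vert j c} | c i j. c < t \<and> i \<in> {1, 2, 3} \<and> j \<in> {1, 2, 3} \<and> i \<noteq> j}"

definition donor_edges :: "nat \<Rightarrow> nat set set" where
  "donor_edges t = {{vert i x, vert j y} | i j x y.
     i \<in> {1, 2, 3} \<and> j \<in> {1, 2, 3} \<and> 3 * t \<le> x \<and> x < 4 * t \<and> t \<le> y \<and> y < 3 * t}"

definition hard_edges :: "nat \<Rightarrow> nat set set" where
  "hard_edges t = triangle_edges t \<union> donor_edges t"

lemma vert_eq_iff [simp]: "i < 4 \<Longrightarrow> j < 4 \<Longrightarrow> vert i x = vert j y \<longleftrightarrow> i = j \<and> x = y"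
  unfolding vert_def by arith

lemma card_vert_image: "card (vert i ` A) = card A"
  by (rule card_image) (simp add: inj_on_def vert_def)

lemma all_verts_hard: "all_verts {1, 2, 3} (org_verts t) = (\<lambda>(i, x). vert i x) ` ({1, 2, 3} \<times> {..<4 * t})"
  unfolding all_verts_def org_verts_def by auto

lemma card_all_verts_hard: "card (all_verts {1, 2, 3} (org_verts t)) = 12 * t"
proof -
  have "inj_on (\<lambda>(i, x). vert i x) ({1, 2, 3} \<times> {..<4 * t})"
    by (auto intro!: inj_onI)
  then show ?thesis
    unfolding all_verts_hard by (simp add: card_image card_cartesian_product)
qed

lemma pe_economy_hard: "pe_economy {1, 2, 3} (org_verts t) (patients t) (hard_edges t)"
  unfolding pe_economy_def
proof (intro conjI)
  show "\<forall>i\<in>{1, 2, 3}. \<forall>j\<in>{1, 2, 3}. i \<noteq> j \<longrightarrow> org_verts t i \<inter> org_verts t j = {}"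
    unfolding org_verts_def by auto
  show "\<forall>i\<in>{1, 2, 3}. patients t i \<subseteq> org_verts t i"
    unfolding patients_def org_verts_def by auto
  show "hard_edges t \<subseteq> {{x, y} | x y. x \<noteq> y \<and> x \<in> all_verts {1, 2, 3} (org_verts t)
                                        \<and> y \<in> all_verts {1, 2, 3} (org_verts t)}"
    unfolding hard_edges_def triangle_edges_def donor_edges_def all_verts_hard by fastforce
qed (simp_all add: org_verts_def)

lemma supplemented_edge_cases:
  assumes "e \<in> hard_edges t \<union> E0"
    and E0: "E0 \<subseteq> {{x, y} | x y. x \<in> V0 \<and> y \<in> all_verts {1, 2, 3} (org_verts t)}"
    and V0: "V0 \<inter> all_verts {1, 2, 3} (org_verts t) = {}"
  shows "card e = 2 \<and> ((\<exists>c\<in>{..<t}. e \<subseteq> {vert 1 c, vert 2 c, vert 3 c}) \<or> e \<inter> (donors t \<union> V0) \<noteq> {})"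
proof -
  consider "e \<in> triangle_edges t" | "e \<in> donor_edges t" | "e \<in> E0"
    using assms(1) unfolding hard_edges_def by blast
  then show ?thesis
  proof cases
    case 1
    then show ?thesis unfolding triangle_edges_def by auto
  next
    case 2
    then show ?thesis unfolding donor_edges_def donors_def by fastforce
  next
    case 3
    then obtain x y where "e = {x, y}" "x \<in> V0" "y \<in> all_verts {1, 2, 3} (org_verts t)"
      using E0 by blast
    moreover have "x \<noteq> y" using calculation V0 by blast
    ultimately show ?thesis by auto
  qed
qed

lemma sum_utilities_hard_le:
  assumes M: "matching (hard_edges t \<union> E0) M"
    and E0: "E0 \<subseteq> {{x, y} | x y. x \<in> V0 \<and> y \<in> all_verts {1, 2, 3} (org_verts t)}"
    and V0: "V0 \<inter> all_verts {1, 2, 3} (org_verts t) = {}" "finite V0"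
  shows "(\<Sum>i\<in>{1, 2, 3}. utility (patients t) i M) \<le> 5 * t + card V0"
proof -
  let ?S = "\<Union>i\<in>{1, 2, 3}. patients t i"
  have "card (donors t) \<le> card ({1, 2, 3::nat} \<times> {3 * t..<4 * t})"
    unfolding donors_def by (rule card_image_le) simp
  then have card_N: "card (donors t \<union> V0) \<le> 3 * t + card V0"
    using card_Un_le[of "donors t" V0] by (simp add: card_cartesian_product)
  have "?S \<subseteq> all_verts {1, 2, 3} (org_verts t)"
    unfolding all_verts_hard patients_def by auto
  then have "(donors t \<union> V0) \<inter> ?S = {}"
    using V0(1) unfolding donors_def patients_def by auto
  moreover have "card e = 2 \<and> ((\<exists>c\<in>{..<t}. e \<subseteq> {vert 1 c, vert 2 c, vert 3 c}) \<or> e \<inter> (donors t \<union> V0) \<noteq> {})"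
    if "e \<in> M" for e
    using that M supplemented_edge_cases[OF _ E0 V0(1)] unfolding matching_def by blast
  ultimately have "card (?S \<inter> \<Union>M) \<le> 2 * card {..<t} + card (donors t \<union> V0)"
    using M V0(2) unfolding matching_def
    by (intro card_covered_by_matching_le[where K = "\<lambda>c. {vert 1 c, vert 2 c, vert 3 c}"])
      (auto simp: donors_def card_insert_if)
  moreover have "(\<Sum>i\<in>{1, 2, 3}. utility (patients t) i M) = card (?S \<inter> \<Union>M)"
    by (rule sum_utility_eq) (auto simp: patients_def)
  ultimately show ?thesis using card_N by simp
qed

lemma all_verts_pair: "all_verts {i, j} (org_verts t) = vert i ` {..<4 * t} \<union> vert j ` {..<4 * t}"
  unfolding all_verts_def org_verts_def by auto

lemma triangle_matching:
  assumes "i \<in> {1, 2, 3}" "j \<in> {1, 2, 3}" "i \<noteq> j"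
  shows "matching {e \<in> hard_edges t. e \<subseteq> all_verts {i, j} (org_verts t)}
           ((\<lambda>c. {vert i c, vert j c}) ` {..<t})"
  using assms unfolding matching_def hard_edges_def triangle_edges_def all_verts_pair by fastforce

lemma donor_matching:
  assumes "i \<in> {1, 2, 3}" "j \<in> {1, 2, 3}" "i \<noteq> j" "\<alpha> \<le> 2 * t"
  shows "\<exists>B. matching {e \<in> hard_edges t. e \<subseteq> all_verts {i, j} (org_verts t)} B \<and>
    vert i ` {t..<t + \<alpha>} \<union> vert j ` {t..<3 * t - \<alpha>} \<subseteq> \<Union>B \<and>
    \<Union>B \<subseteq> vert i ` {t..<4 * t} \<union> vert j ` {t..<4 * t}"
proof -
  define D where "D = vert i ` {3 * t..<4 * t} \<union> vert j ` {3 * t..<4 * t}"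
  define P where "P = vert i ` {t..<t + \<alpha>} \<union> vert j ` {t..<3 * t - \<alpha>}"
  have ij: "i < 4" "j < 4" using assms by auto
  have "card D = 2 * t"
    unfolding D_def using ij \<open>i \<noteq> j\<close> by (subst card_Un_disjoint) (auto simp: card_vert_image)
  moreover have "card P \<le> \<alpha> + (3 * t - \<alpha> - t)"
    unfolding P_def using card_Un_le by (metis card_atLeastLessThan card_vert_image add_diff_cancel_left')
  ultimately have "card P \<le> card D" using \<open>\<alpha> \<le> 2 * t\<close> by linarith
  moreover have "D \<inter> P = {}" unfolding D_def P_def using ij \<open>i \<noteq> j\<close> \<open>\<alpha> \<le> 2 * t\<close> by auto
  ultimately obtain B where B: "matching {{d, p} | d p. d \<in> D \<and> p \<in> P} B" "P \<subseteq> \<Union>B" "\<Union>B \<subseteq> D \<union> P"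
    using matching_complete_bipartite[of P D] by (auto simp: D_def P_def)
  have "{{d, p} | d p. d \<in> D \<and> p \<in> P} \<subseteq> {e \<in> hard_edges t. e \<subseteq> all_verts {i, j} (org_verts t)}"
    unfolding D_def P_def hard_edges_def donor_edges_def all_verts_pair using assms by fastforce
  then have "matching {e \<in> hard_edges t. e \<subseteq> all_verts {i, j} (org_verts t)} B"
    by (rule matching_mono[OF B(1)])
  moreover have "D \<union> P \<subseteq> vert i ` {t..<4 * t} \<union> vert j ` {t..<4 * t}"
    unfolding D_def P_def using \<open>\<alpha> \<le> 2 * t\<close> by auto
  then have "\<Union>B \<subseteq> vert i ` {t..<4 * t} \<union> vert j ` {t..<4 * t}"
    using B(3) by (rule subset_trans[rotated])
  ultimately show ?thesis
    using B(2) unfolding P_def by (intro exI[of _ B] conjI)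
qed

lemma pair_utilities_achievable:
  assumes "i \<in> {1, 2, 3}" "j \<in> {1, 2, 3}" "i \<noteq> j" "\<alpha> \<le> 2 * t"
  shows "\<exists>M. matching {e \<in> hard_edges t. e \<subseteq> all_verts {i, j} (org_verts t)} M \<and>
    t + \<alpha> \<le> utility (patients t) i M \<and> 3 * t - \<alpha> \<le> utility (patients t) j M"
proof -
  define T where "T = (\<lambda>c. {vert i c, vert j c}) ` {..<t}"
  obtain B where B: "matching {e \<in> hard_edges t. e \<subseteq> all_verts {i, j} (org_verts t)} B"
    "vert i ` {t..<t + \<alpha>} \<union> vert j ` {t..<3 * t - \<alpha>} \<subseteq> \<Union>B"
    "\<Union>B \<subseteq> vert i ` {t..<4 * t} \<union> vert j ` {t..<4 * t}"
    using donor_matching[OF assms] by blast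
  have ij: "i < 4" "j < 4" using assms by auto
  have "\<Union>T \<inter> \<Union>B = {}"
    using B(3) ij unfolding T_def by fastforce
  moreover have "matching {e \<in> hard_edges t. e \<subseteq> all_verts {i, j} (org_verts t)} T"
    unfolding T_def by (rule triangle_matching[OF assms(1-3)])
  ultimately have M: "matching {e \<in> hard_edges t. e \<subseteq> all_verts {i, j} (org_verts t)} (T \<union> B)"
    using B(1) matching_Un by blast
  have "vert i ` {..<t + \<alpha>} = vert i ` {..<t} \<union> vert i ` {t..<t + \<alpha>}"
    by (auto simp: image_Un[symmetric])
  also have "\<dots> \<subseteq> \<Union>(T \<union> B)"
    using B(2) unfolding T_def by auto
  finally have "card (vert i ` {..<t + \<alpha>}) \<le> utility (patients t) i (T \<union> B)"
    using \<open>\<alpha> \<le> 2 * t\<close> by (intro card_le_utility) (auto simp: patients_def)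
  then have "t + \<alpha> \<le> utility (patients t) i (T \<union> B)"
    by (simp add: card_vert_image)
  have "vert j ` {..<3 * t - \<alpha>} = vert j ` {..<t} \<union> vert j ` {t..<3 * t - \<alpha>}"
    using \<open>\<alpha> \<le> 2 * t\<close> by (auto simp: image_Un[symmetric])
  also have "\<dots> \<subseteq> \<Union>(T \<union> B)"
    using B(2) unfolding T_def by auto
  finally have "card (vert j ` {..<3 * t - \<alpha>}) \<le> utility (patients t) j (T \<union> B)"
    by (intro card_le_utility) (auto simp: patients_def)
  then have "3 * t - \<alpha> \<le> utility (patients t) j (T \<union> B)"
    by (simp add: card_vert_image)
  with M \<open>t + \<alpha> \<le> utility (patients t) i (T \<union> B)\<close> show ?thesis by blast
qed

lemma low_utility_pair_exists:
  fixes u :: "nat \<Rightarrow> nat"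
  assumes "(\<Sum>i\<in>{1, 2, 3}. u i) \<le> 5 * t + d" "18 * d + 54 \<le> 12 * t"
  shows "\<exists>i\<in>{1, 2, 3}. \<exists>j\<in>{1, 2, 3}. i \<noteq> j \<and> u i < 3 * t \<and> u j < 3 * t \<and> u i + u j + 2 \<le> 4 * t"
proof -
  have sum: "u 1 + u 2 + u 3 \<le> 5 * t + d" using assms(1) by simp
  consider "u 1 \<le> u 3" "u 2 \<le> u 3" | "u 1 \<le> u 2" "u 3 \<le> u 2" | "u 2 \<le> u 1" "u 3 \<le> u 1"
    by linarith
  then show ?thesis
  proof cases
    case 1
    then show ?thesis using sum assms(2) by (intro bexI[of _ 1] bexI[of _ 2]) auto
  next
    case 2
    then show ?thesis using sum assms(2) by (intro bexI[of _ 1] bexI[of _ 3]) auto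
  next
    case 3
    then show ?thesis using sum assms(2) by (intro bexI[of _ 2] bexI[of _ 3]) auto
  qed
qed

lemma pair_blocks_hard:
  assumes "i \<in> {1, 2, 3}" "j \<in> {1, 2, 3}" "i \<noteq> j"
    and "utility (patients t) i M < 3 * t" "utility (patients t) j M < 3 * t"
    and "utility (patients t) i M + utility (patients t) j M + 2 \<le> 4 * t"
  shows "blocks {1, 2, 3} (org_verts t) (patients t) (hard_edges t) {i, j} M"
proof -
  define \<alpha> where "\<alpha> = utility (patients t) i M + 1 - t"
  have "\<alpha> \<le> 2 * t" using assms(4) unfolding \<alpha>_def by linarith
  then obtain M' where "matching {e \<in> hard_edges t. e \<subseteq> all_verts {i, j} (org_verts t)} M'"
    "t + \<alpha> \<le> utility (patients t) i M'" "3 * t - \<alpha> \<le> utility (patients t) j M'"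
    using pair_utilities_achievable[OF assms(1-3)] by blast
  moreover have "utility (patients t) i M < t + \<alpha>" "utility (patients t) j M < 3 * t - \<alpha>"
    using assms(5,6) unfolding \<alpha>_def by linarith+
  ultimately show ?thesis
    unfolding blocks_def using assms(1,2) by (intro conjI exI[of _ M']) auto
qed

lemma supp_core_empty_hard:
  "\<not> supp_core_nonempty {1, 2, 3} (org_verts t) (patients t) (hard_edges t) (real (12 * t) / 18 - 3)"
proof
  assume "supp_core_nonempty {1, 2, 3} (org_verts t) (patients t) (hard_edges t) (real (12 * t) / 18 - 3)"
  then obtain V0 E0 M where V0: "finite V0" "real (card V0) \<le> real (12 * t) / 18 - 3"
      "V0 \<inter> all_verts {1, 2, 3} (org_verts t) = {}"
    and E0: "E0 \<subseteq> {{x, y} | x y. x \<in> V0 \<and> y \<in> all_verts {1, 2, 3} (org_verts t)}"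
    and core: "in_supp_core {1, 2, 3} (org_verts t) (patients t) (hard_edges t) E0 M"
    unfolding supp_core_nonempty_def by blast
  have "matching (hard_edges t \<union> E0) M"
    using core unfolding in_supp_core_def by blast
  then have "(\<Sum>i\<in>{1, 2, 3}. utility (patients t) i M) \<le> 5 * t + card V0"
    using sum_utilities_hard_le E0 V0(1,3) by blast
  moreover have "18 * card V0 + 54 \<le> 12 * t"
    using V0(2) by linarith
  ultimately obtain i j where "i \<in> {1, 2, 3}" "j \<in> {1, 2, 3}" "i \<noteq> j"
    "utility (patients t) i M < 3 * t" "utility (patients t) j M < 3 * t"
    "utility (patients t) i M + utility (patients t) j M + 2 \<le> 4 * t"
    using low_utility_pair_exists by blast
  then have "blocks {1, 2, 3} (org_verts t) (patients t) (hard_edges t) {i, j} M"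
    by (rule pair_blocks_hard)
  then show False
    using core unfolding in_supp_core_def by blast
qed

theorem mainTheorem2:
  shows "\<forall>m::nat. \<exists>(Vs :: nat \<Rightarrow> nat set) (U :: nat \<Rightarrow> nat set) (E :: nat set set).
     pe_economy {1, 2, 3} Vs U E \<and>
     card (all_verts {1, 2, 3} Vs) \<ge> m \<and>
     \<not> supp_core_nonempty {1, 2, 3} Vs U E (real (card (all_verts {1, 2, 3} Vs)) / 18 - 3)"
proof (intro allI exI conjI)
  fix m :: nat
  show "pe_economy {1, 2, 3} (org_verts m) (patients m) (hard_edges m)"
    by (rule pe_economy_hard)
  show "m \<le> card (all_verts {1, 2, 3} (org_verts m))"
    using card_all_verts_hard[of m] by simp
  show "\<not> supp_core_nonempty {1, 2, 3} (org_verts m) (patients m) (hard_edges m)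
          (real (card (all_verts {1, 2, 3} (org_verts m))) / 18 - 3)"
    using supp_core_empty_hard[of m] card_all_verts_hard[of m] by simp
qed

end
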